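(* Let $C$ be a nonempty subset of a Hilbert space $H$ and let $\mathcal{S}=\{T_s:s\in S\}$ be a representation of a semigroup $S$ on $C$ by nonexpansive self-mappings. Suppose that $\{T_sc:s\in S\}$ is bounded for some $c\in C$. Let $X$ be a closed subspace of $\ell^\infty(S)$ containing the constant functions and invariant under left translations. If $X$ has a left invariant mean $\mu$ and if $y_c\in X$ for each $y\in H$, where $y_c(s)=\langle T_sc\,|\,y\rangle$ ($s\in S$), then $T_\mu c\in A_C(\mathcal{S})$; in particular $A_C(\mathcal{S})\neq\emptyset$.
   Context: A representation is a family $T_s:C\to C$ with $T_{st}=T_s\circ T_t$; nonexpansive means $\|T_sx-T_sy\|\le\|x-y\|$. $\ell^\infty(S)$ is the space of bounded complex functions on $S$ with sup norm; the left translate of $f$ by $s$ is $(\ell_sf)(t)=f(st)$. A mean on $X$ is $m\in X^*$ with $\|m\|=m(1)=1$; it is left invariant if $m(\ell_sf)=m(f)$ for all $s\in S$, $f\in X$. $T_\mu c$ denotes the unique element $a\in H$ with $\langle a\,|\,y\rangle=\mu(y_c)$ for all $y\in H$. $A_C(\mathcal{S})$ is the set of $a\in H$ with $\|a-T_sx\|\le\|a-x\|$ for all $x\in C$, $s\in S$. *)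

theory Defs
  imports "HOL-Analysis.Analysis"
begin

text \<open>The HOL library only has real inner product spaces.  A complex inner product
space is a real inner product space carrying a complex scalar multiplication and a
complex inner product, conjugate-linear in the first and linear in the second
argument, whose real part is the real inner product (so the norm is the one
induced by the complex inner product).\<close>

class complex_inner = real_inner +
  fixes scaleC :: "complex \<Rightarrow> 'a \<Rightarrow> 'a"
    and cinner :: "'a \<Rightarrow> 'a \<Rightarrow> complex"
  assumes scaleC_add_right: "scaleC a (x + y) = scaleC a x + scaleC a y"
    and scaleC_add_left: "scaleC (a + b) x = scaleC a x + scaleC b x"
    and scaleC_scaleC: "scaleC a (scaleC b x) = scaleC (a * b) x"
    and scaleC_of_real: "scaleC (complex_of_real r) x = scaleR r x"
    and cinner_add_right: "cinner x (y + z) = cinner x y + cinner x z"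
    and cinner_scaleC_right: "cinner x (scaleC a y) = a * cinner x y"
    and cinner_commute: "cinner y x = cnj (cinner x y)"
    and Re_cinner: "Re (cinner x y) = inner x y"

class complex_hilbert = complex_inner + complete_space

instantiation complex :: complex_hilbert
begin
definition scaleC_complex :: "complex \<Rightarrow> complex \<Rightarrow> complex" where
  "scaleC_complex a x = a * x"
definition cinner_complex :: "complex \<Rightarrow> complex \<Rightarrow> complex" where
  "cinner_complex x y = cnj x * y"
instance
  by standard (auto simp: scaleC_complex_def cinner_complex_def algebra_simps
      inner_complex_def scaleR_conv_of_real)
end

definition supnorm :: "('s \<Rightarrow> complex) \<Rightarrow> real" where
  "supnorm f = (SUP s. cmod (f s))"

definition linfty :: "('s \<Rightarrow> complex) set" where
  "linfty = {f. bounded (range f)}"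

definition ltrans :: "'s::semigroup_mult \<Rightarrow> ('s \<Rightarrow> complex) \<Rightarrow> ('s \<Rightarrow> complex)" where
  "ltrans s f = (\<lambda>t. f (s * t))"

definition closed_linfty_subspace :: "('s \<Rightarrow> complex) set \<Rightarrow> bool" where
  "closed_linfty_subspace X \<longleftrightarrow>
     X \<subseteq> linfty \<and> (\<lambda>_. 0) \<in> X \<and>
     (\<forall>f\<in>X. \<forall>g\<in>X. (\<lambda>s. f s + g s) \<in> X) \<and>
     (\<forall>a. \<forall>f\<in>X. (\<lambda>s. a * f s) \<in> X) \<and>
     (\<forall>F g. (\<forall>n. F n \<in> X) \<and> g \<in> linfty \<and>
        (\<lambda>n. supnorm (\<lambda>s. F n s - g s)) \<longlonglongrightarrow> 0 \<longrightarrow> g \<in> X)"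

definition contains_constants :: "('s \<Rightarrow> complex) set \<Rightarrow> bool" where
  "contains_constants X \<longleftrightarrow> (\<forall>a. (\<lambda>_. a) \<in> X)"

definition left_translation_invariant :: "('s::semigroup_mult \<Rightarrow> complex) set \<Rightarrow> bool" where
  "left_translation_invariant X \<longleftrightarrow> (\<forall>s. \<forall>f\<in>X. ltrans s f \<in> X)"

definition in_dual :: "('s \<Rightarrow> complex) set \<Rightarrow> (('s \<Rightarrow> complex) \<Rightarrow> complex) \<Rightarrow> bool" where
  "in_dual X m \<longleftrightarrow>
     (\<forall>f\<in>X. \<forall>g\<in>X. m (\<lambda>s. f s + g s) = m f + m g) \<and>
     (\<forall>a. \<forall>f\<in>X. m (\<lambda>s. a * f s) = a * m f) \<and>
     (\<exists>K. \<forall>f\<in>X. cmod (m f) \<le> K * supnorm f)"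

definition dual_norm :: "('s \<Rightarrow> complex) set \<Rightarrow> (('s \<Rightarrow> complex) \<Rightarrow> complex) \<Rightarrow> real" where
  "dual_norm X m = Sup {cmod (m f) | f. f \<in> X \<and> supnorm f \<le> 1}"

definition is_mean :: "('s \<Rightarrow> complex) set \<Rightarrow> (('s \<Rightarrow> complex) \<Rightarrow> complex) \<Rightarrow> bool" where
  "is_mean X m \<longleftrightarrow> in_dual X m \<and> dual_norm X m = 1 \<and> m (\<lambda>_. 1) = 1"

definition left_invariant_mean ::
    "('s::semigroup_mult \<Rightarrow> complex) set \<Rightarrow> (('s \<Rightarrow> complex) \<Rightarrow> complex) \<Rightarrow> bool" where
  "left_invariant_mean X m \<longleftrightarrow> is_mean X m \<and> (\<forall>s. \<forall>f\<in>X. m (ltrans s f) = m f)"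

definition nonexpansive_representation ::
    "'h::complex_hilbert set \<Rightarrow> ('s::semigroup_mult \<Rightarrow> 'h \<Rightarrow> 'h) \<Rightarrow> bool" where
  "nonexpansive_representation C T \<longleftrightarrow>
     (\<forall>s. T s ` C \<subseteq> C) \<and>
     (\<forall>s t. \<forall>x\<in>C. T (s * t) x = T s (T t x)) \<and>
     (\<forall>s. \<forall>x\<in>C. \<forall>y\<in>C. norm (T s x - T s y) \<le> norm (x - y))"

definition orbit_fun :: "('s \<Rightarrow> 'h::complex_hilbert \<Rightarrow> 'h) \<Rightarrow> 'h \<Rightarrow> 'h \<Rightarrow> ('s \<Rightarrow> complex)" where
  "orbit_fun T c y = (\<lambda>s. cinner (T s c) y)"

definition T_mu :: "(('s \<Rightarrow> complex) \<Rightarrow> complex) \<Rightarrow> ('s \<Rightarrow> 'h::complex_hilbert \<Rightarrow> 'h) \<Rightarrow> 'h \<Rightarrow> 'h" where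
  "T_mu \<mu> T c = (THE a. \<forall>y. cinner a y = \<mu> (orbit_fun T c y))"

definition A_C :: "'h::complex_hilbert set \<Rightarrow> ('s \<Rightarrow> 'h \<Rightarrow> 'h) \<Rightarrow> 'h set" where
  "A_C C T = {a. \<forall>x\<in>C. \<forall>s. norm (a - T s x) \<le> norm (a - x)}"

end

theory Submission
  imports Defs
begin

(* Riesz representation yields a = T_mu c with <a | y> = mu(y_c).  For x in C and s in S let
   w = T_s x - x and D = |T_s x|^2 - |x|^2; then |a - T_s x|^2 - |a - x|^2 = D - 2 Re mu(w_c),
   so it suffices that h(t) = D - 2 w_c(st) has Re mu(h) <= 0.  Nonexpansiveness of T_s gives
   D - 2 Re <T_s p | w> <= |p - x|^2 - |T_s p - x|^2 for p in C, so along the orbit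
   p_k = T_(s^k t) c the partial sums of Re h(s^k t) telescope and are bounded uniformly in n, t.
   By left invariance the n-th partial sum has mean n mu(h), while a mean preserves upper bounds
   on the real part; hence Re mu(h) <= 0.  The detour through partial sums is needed because
   t |-> |T_t c - x|^2 need not lie in X. *)

lemma cinner_scaleC_left: "cinner (scaleC a x) y = cnj a * cinner x (y::'a::complex_inner)"
  by (metis cinner_commute cinner_scaleC_right complex_cnj_mult)

lemma cinner_self: "cinner x x = complex_of_real ((norm (x::'a::complex_inner))\<^sup>2)"
proof (rule complex_eqI)
  show "Im (cinner x x) = Im (complex_of_real ((norm x)\<^sup>2))"
    using cinner_commute[of x x] by (metis Im_complex_of_real Reals_cnj_iff complex_is_Real_iff)
qed (simp add: Re_cinner power2_norm_eq_inner)

lemma norm_scaleC: "norm (scaleC a (x::'a::complex_inner)) = cmod a * norm x"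
proof -
  have "cinner (scaleC a x) (scaleC a x) = (a * cnj a) * cinner x x"
    by (simp add: cinner_scaleC_left cinner_scaleC_right)
  also have "\<dots> = complex_of_real ((cmod a * norm x)\<^sup>2)"
    by (simp add: cinner_self complex_norm_square[symmetric] power_mult_distrib)
  finally have "(norm (scaleC a x))\<^sup>2 = (cmod a * norm x)\<^sup>2"
    by (metis cinner_self of_real_eq_iff)
  then show ?thesis
    by (simp add: power2_eq_iff_nonneg)
qed

lemma cinner_norm_le: "cmod (cinner x y) \<le> norm x * norm (y::'a::complex_inner)"
proof (cases "cinner x y = 0")
  case False
  define u where "u = cnj (cinner x y) / cmod (cinner x y)"
  \<comment> \<open>The phase \<open>u\<close> makes the inner product real, reducing to the real Cauchy-Schwarz
    inequality.\<close>
  have "cnj (cinner x y) * cinner x y = cmod (cinner x y) * cmod (cinner x y)"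
    by (metis complex_norm_square mult.commute of_real_mult power2_eq_square)
  then have "cinner x (scaleC u y) = cmod (cinner x y)"
    using False by (simp add: u_def cinner_scaleC_right field_simps)
  then have "cmod (cinner x y) = inner x (scaleC u y)"
    by (metis Re_cinner Re_complex_of_real)
  also have "\<dots> \<le> norm x * norm (scaleC u y)"
    by (rule norm_cauchy_schwarz)
  also have "norm (scaleC u y) = norm y"
    using False by (simp add: norm_scaleC u_def norm_divide)
  finally show ?thesis .
qed simp

section \<open>Riesz representation\<close>

lemma linear_coeff_eq_0_if_quadratic_nonneg:
  fixes a b :: real
  assumes "a \<ge> 0" and "\<And>t. 0 \<le> t * b + t\<^sup>2 * a"
  shows "b = 0"
proof -
  define t where "t = - b / (a + 1)"
  have "t * (a + 1) = - b"
    using \<open>a \<ge> 0\<close> by (simp add: t_def)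
  have "0 \<le> (t * b + t\<^sup>2 * a) * (a + 1)\<^sup>2"
    using assms by simp
  also have "\<dots> = b * (t * (a + 1)) * (a + 1) + a * (t * (a + 1))\<^sup>2"
    by (simp add: power2_eq_square algebra_simps)
  also have "\<dots> = - b\<^sup>2"
    unfolding \<open>t * (a + 1) = - b\<close> by (simp add: power2_eq_square algebra_simps)
  finally show ?thesis
    by simp
qed

lemma parallelogram_law:
  fixes x y :: "'a::real_inner"
  shows "(norm (x + y))\<^sup>2 + (norm (x - y))\<^sup>2 = 2 * (norm x)\<^sup>2 + 2 * (norm y)\<^sup>2"
  by (simp add: power2_norm_eq_inner inner_add_left inner_add_right inner_diff_left
      inner_diff_right inner_commute)

lemma inner_eq_if_energy_minimal:
  fixes \<psi> :: "'a::real_inner \<Rightarrow> real"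
  assumes "linear \<psi>" and min: "\<And>z. (norm a)\<^sup>2 - 2 * \<psi> a \<le> (norm z)\<^sup>2 - 2 * \<psi> z"
  shows "inner a y = \<psi> y"
proof -
  have "0 \<le> t * (2 * (inner a y - \<psi> y)) + t\<^sup>2 * (norm y)\<^sup>2" for t :: real
  proof -
    have "(norm (a + t *\<^sub>R y))\<^sup>2 = (norm a)\<^sup>2 + 2 * t * inner a y + t\<^sup>2 * (norm y)\<^sup>2"
      unfolding power2_norm_eq_inner
      by (simp add: inner_add_left inner_add_right inner_commute power2_eq_square algebra_simps)
    moreover have "\<psi> (a + t *\<^sub>R y) = \<psi> a + t * \<psi> y"
      using \<open>linear \<psi>\<close> by (simp add: linear_add linear_scale)
    ultimately show ?thesis
      using min[of "a + t *\<^sub>R y"] by (simp add: algebra_simps)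
  qed
  then have "2 * (inner a y - \<psi> y) = 0"
    by (rule linear_coeff_eq_0_if_quadratic_nonneg[rotated]) simp
  then show ?thesis
    by simp
qed

lemma bounded_linear_energy_has_minimum:
  fixes \<psi> :: "'a::{real_inner,complete_space} \<Rightarrow> real"
  assumes "bounded_linear \<psi>"
  shows "\<exists>a. \<forall>z. (norm a)\<^sup>2 - 2 * \<psi> a \<le> (norm z)\<^sup>2 - 2 * \<psi> z"
proof -
  define E where "E x = (norm x)\<^sup>2 - 2 * \<psi> x" for x
  obtain K where K: "\<And>x. \<bar>\<psi> x\<bar> \<le> norm x * K"
    using bounded_linear.pos_bounded[OF assms] by auto
  have "- K\<^sup>2 \<le> E x" for x
  proof -
    have "0 \<le> (norm x - K)\<^sup>2"
      by simp
    then show ?thesis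
      using K[of x] by (simp add: E_def power2_diff abs_le_iff algebra_simps)
  qed
  then have bdd: "bdd_below (range E)"
    by (rule bdd_belowI2)
  define d where "d = Inf (range E)"
  have d_le: "d \<le> E z" for z
    unfolding d_def using bdd by (simp add: cInf_lower)
  obtain ys where ys: "\<And>n. ys n \<in> range E" "ys \<longlonglongrightarrow> d"
    using closure_contains_Inf[OF _ bdd] unfolding d_def closure_sequential by blast
  define xs where "xs n = inv E (ys n)" for n
  have "(\<lambda>n. E (xs n)) \<longlonglongrightarrow> d"
    using ys by (simp add: xs_def f_inv_into_f)
  \<comment> \<open>By the parallelogram law, almost minimal points are close to each other.\<close>
  have close: "(norm (x - y))\<^sup>2 \<le> 2 * (E x - d) + 2 * (E y - d)" for x y
  proof -
    have "\<psi> ((1/2) *\<^sub>R (x + y)) = (\<psi> x + \<psi> y) / 2"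
      using linear_add[OF bounded_linear.linear[OF assms]]
        linear_scale[OF bounded_linear.linear[OF assms]] by simp
    then have "E ((1/2) *\<^sub>R (x + y)) = (norm (x + y))\<^sup>2 / 4 - \<psi> x - \<psi> y"
      by (simp add: E_def power_divide)
    then have "E x + E y = 2 * E ((1/2) *\<^sub>R (x + y)) + (norm (x - y))\<^sup>2 / 2"
      using parallelogram_law[of x y] by (simp add: E_def)
    then show ?thesis
      using d_le[of "(1/2) *\<^sub>R (x + y)"] by simp
  qed
  have "Cauchy xs"
  proof (rule metric_CauchyI)
    fix e :: real assume "e > 0"
    then have "\<forall>\<^sub>F n in sequentially. E (xs n) < d + e\<^sup>2 / 4"
      using order_tendstoD(2)[OF \<open>(\<lambda>n. E (xs n)) \<longlonglongrightarrow> d\<close>] by simp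
    then obtain N where N: "\<And>n. n \<ge> N \<Longrightarrow> E (xs n) < d + e\<^sup>2 / 4"
      by (auto simp: eventually_sequentially)
    have "dist (xs m) (xs n) < e" if "m \<ge> N" "n \<ge> N" for m n
    proof -
      have "(norm (xs m - xs n))\<^sup>2 < e\<^sup>2"
        using close[of "xs m" "xs n"] N[OF that(1)] N[OF that(2)] by simp
      then show ?thesis
        using \<open>e > 0\<close> by (simp add: dist_norm power_less_imp_less_base)
    qed
    then show "\<exists>M. \<forall>m\<ge>M. \<forall>n\<ge>M. dist (xs m) (xs n) < e" by blast
  qed
  then obtain a where "xs \<longlonglongrightarrow> a"
    using Cauchy_convergent convergent_def by blast
  then have "(\<lambda>n. E (xs n)) \<longlonglongrightarrow> E a"
    unfolding E_def by (intro tendsto_intros bounded_linear.tendsto[OF assms])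
  then have "E a = d"
    using \<open>(\<lambda>n. E (xs n)) \<longlonglongrightarrow> d\<close> by (rule LIMSEQ_unique)
  then have "\<forall>z. E a \<le> E z"
    using d_le by simp
  then show ?thesis
    unfolding E_def by blast
qed

lemma real_inner_representation:
  fixes \<psi> :: "'a::{real_inner,complete_space} \<Rightarrow> real"
  assumes "bounded_linear \<psi>"
  shows "\<exists>a. \<forall>y. inner a y = \<psi> y"
  using bounded_linear_energy_has_minimum[OF assms]
    inner_eq_if_energy_minimal[OF bounded_linear.linear[OF assms]] by blast

lemma complex_inner_representation:
  fixes \<phi> :: "'a::complex_hilbert \<Rightarrow> complex"
  assumes add: "\<And>x y. \<phi> (x + y) = \<phi> x + \<phi> y"
    and scale: "\<And>u x. \<phi> (scaleC u x) = u * \<phi> x"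
    and bound: "\<And>x. cmod (\<phi> x) \<le> norm x * K"
  shows "\<exists>!a. \<forall>y. cinner a y = \<phi> y"
proof -
  have "bounded_linear (\<lambda>x. Re (\<phi> x))"
  proof (rule bounded_linear_intro)
    show "Re (\<phi> (r *\<^sub>R x)) = r *\<^sub>R Re (\<phi> x)" for r x
      using scale[of "complex_of_real r" x] by (simp add: scaleC_of_real)
    show "norm (Re (\<phi> x)) \<le> norm x * K" for x
      using bound[of x] abs_Re_le_cmod[of "\<phi> x"] by simp
  qed (simp add: add)
  then obtain a where a: "\<And>y. inner a y = Re (\<phi> y)"
    using real_inner_representation by blast
  \<comment> \<open>The imaginary part is recovered from the real one by rotating the argument.\<close>
  have "cinner a y = \<phi> y" for y
  proof (rule complex_eqI)
    have "Im (cinner a y) = Re (cinner a (scaleC (- \<i>) y))"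
      by (simp add: cinner_scaleC_right)
    also have "\<dots> = Im (\<phi> y)"
      by (simp add: Re_cinner a scale)
    finally show "Im (cinner a y) = Im (\<phi> y)" .
  qed (simp add: Re_cinner a)
  moreover have "b = a" if "\<forall>y. cinner b y = \<phi> y" for b
  proof -
    have "inner b y = inner a y" for y
      using that \<open>\<And>y. cinner a y = \<phi> y\<close> by (metis Re_cinner)
    then have "inner (b - a) (b - a) = 0"
      by (simp add: inner_diff_left)
    then show ?thesis
      by simp
  qed
  ultimately show ?thesis
    by blast
qed

section \<open>Means on subspaces of bounded functions\<close>

lemma supnorm_upper:
  assumes "f \<in> linfty"
  shows "cmod (f t) \<le> supnorm f"
proof -
  obtain B where "\<And>s. cmod (f s) \<le> B"
    using assms unfolding linfty_def bounded_iff by blast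
  then show ?thesis
    unfolding supnorm_def by (intro cSUP_upper bdd_aboveI2) auto
qed

lemma supnorm_least: "(\<And>t. cmod (f t) \<le> r) \<Longrightarrow> supnorm f \<le> r"
  unfolding supnorm_def by (rule cSUP_least) auto

lemma supnorm_nonneg: "f \<in> linfty \<Longrightarrow> 0 \<le> supnorm f"
  using supnorm_upper[of f undefined] norm_ge_zero[of "f undefined"] by linarith

lemma closed_linfty_subspace_add:
  "closed_linfty_subspace X \<Longrightarrow> f \<in> X \<Longrightarrow> g \<in> X \<Longrightarrow> (\<lambda>s. f s + g s) \<in> X"
  unfolding closed_linfty_subspace_def by simp

lemma closed_linfty_subspace_mult:
  "closed_linfty_subspace X \<Longrightarrow> f \<in> X \<Longrightarrow> (\<lambda>s. a * f s) \<in> X"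
  unfolding closed_linfty_subspace_def by simp

lemma closed_linfty_subspace_sum:
  assumes "closed_linfty_subspace X" and "\<And>i. i \<in> I \<Longrightarrow> f i \<in> X"
  shows "(\<lambda>s. \<Sum>i\<in>I. f i s) \<in> X"
  using assms(2)
proof (induction I rule: infinite_finite_induct)
  case (insert i I)
  then show ?case
    using closed_linfty_subspace_add[OF assms(1)] by simp
qed (use assms(1) in \<open>simp_all add: closed_linfty_subspace_def\<close>)

lemma in_dual_add: "in_dual X m \<Longrightarrow> f \<in> X \<Longrightarrow> g \<in> X \<Longrightarrow> m (\<lambda>s. f s + g s) = m f + m g"
  unfolding in_dual_def by simp

lemma in_dual_mult: "in_dual X m \<Longrightarrow> f \<in> X \<Longrightarrow> m (\<lambda>s. a * f s) = a * m f"
  unfolding in_dual_def by simp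

lemma in_dual_sum:
  assumes "closed_linfty_subspace X" and "in_dual X m" and "\<And>i. i \<in> I \<Longrightarrow> f i \<in> X"
  shows "m (\<lambda>s. \<Sum>i\<in>I. f i s) = (\<Sum>i\<in>I. m (f i))"
  using assms(3)
proof (induction I rule: infinite_finite_induct)
  case (insert i I)
  have "f i \<in> X" and "(\<lambda>s. \<Sum>i\<in>I. f i s) \<in> X"
    using insert.prems by (auto intro: closed_linfty_subspace_sum[OF assms(1)])
  then show ?case
    using insert by (simp add: in_dual_add[OF assms(2)])
qed (use assms(1,2) in_dual_mult[of X m "\<lambda>_. 0" 0] in \<open>simp_all add: closed_linfty_subspace_def\<close>)

lemma dual_norm_upper:
  assumes "X \<subseteq> linfty" and "in_dual X m" and "f \<in> X" and "supnorm f \<le> 1"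
  shows "cmod (m f) \<le> dual_norm X m"
  unfolding dual_norm_def
proof (rule cSup_upper)
  obtain K where K: "\<And>g. g \<in> X \<Longrightarrow> cmod (m g) \<le> K * supnorm g"
    using assms(2) unfolding in_dual_def by blast
  have "cmod (m g) \<le> max K 0" if "g \<in> X" "supnorm g \<le> 1" for g
  proof -
    have "0 \<le> supnorm g"
      using assms(1) that(1) by (auto intro: supnorm_nonneg)
    then have "K * supnorm g \<le> max K 0"
      using that(2) by (cases "K \<ge> 0") (auto simp: mult_left_le mult_nonpos_nonneg)
    then show ?thesis
      using K[OF that(1)] by linarith
  qed
  then show "bdd_above {cmod (m f) |f. f \<in> X \<and> supnorm f \<le> 1}"
    by (auto intro!: bdd_aboveI)
qed (use assms in blast)

lemma mean_norm_le:
  assumes X: "closed_linfty_subspace X" and \<mu>: "is_mean X \<mu>" and "g \<in> X"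
  shows "cmod (\<mu> g) \<le> supnorm g"
proof -
  have lin: "X \<subseteq> linfty"
    using X by (simp add: closed_linfty_subspace_def)
  have dual: "in_dual X \<mu>" and "dual_norm X \<mu> = 1"
    using \<mu> by (simp_all add: is_mean_def)
  consider "supnorm g = 0" | "supnorm g > 0"
    using supnorm_nonneg[of g] lin \<open>g \<in> X\<close> by force
  then show ?thesis
  proof cases
    case 1
    then show ?thesis
      using dual \<open>g \<in> X\<close> unfolding in_dual_def by fastforce
  next
    case 2
    define r where "r = supnorm g"
    define h where "h s = complex_of_real (1 / r) * g s" for s
    have "h \<in> X"
      unfolding h_def by (rule closed_linfty_subspace_mult[OF X \<open>g \<in> X\<close>])
    moreover have "supnorm h \<le> 1"
      using 2 supnorm_upper[of g] lin \<open>g \<in> X\<close>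
      by (intro supnorm_least) (auto simp: h_def r_def norm_mult norm_divide)
    ultimately have "cmod (\<mu> h) \<le> 1"
      using dual_norm_upper[OF lin dual] \<open>dual_norm X \<mu> = 1\<close> by fastforce
    moreover have "\<mu> h = complex_of_real (1 / r) * \<mu> g"
      unfolding h_def by (rule in_dual_mult[OF dual \<open>g \<in> X\<close>])
    ultimately show ?thesis
      using 2 by (simp add: r_def norm_mult norm_divide)
  qed
qed

lemma mean_const:
  assumes "is_mean X \<mu>" and "contains_constants X"
  shows "\<mu> (\<lambda>_. a) = a"
proof -
  have "\<mu> (\<lambda>_. a * 1) = a * \<mu> (\<lambda>_. 1)"
    using assms by (intro in_dual_mult) (auto simp: is_mean_def contains_constants_def)
  then show ?thesis
    using assms(1) by (simp add: is_mean_def)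
qed

lemma mean_Re_le:
  assumes X: "closed_linfty_subspace X" and cc: "contains_constants X" and \<mu>: "is_mean X \<mu>"
    and "f \<in> X" and le: "\<And>t. Re (f t) \<le> M"
  shows "Re (\<mu> f) \<le> M"
proof (rule ccontr)
  assume "\<not> Re (\<mu> f) \<le> M"
  define e where "e = Re (\<mu> f) - M"
  have "e > 0"
    using \<open>\<not> Re (\<mu> f) \<le> M\<close> by (simp add: e_def)
  define B where "B = supnorm f + \<bar>M\<bar>"
  have B: "cmod (f t - M) \<le> B" for t
    using supnorm_upper[of f t] X \<open>f \<in> X\<close> norm_triangle_ineq4[of "f t" "complex_of_real M"]
    by (fastforce simp: B_def closed_linfty_subspace_def)
  \<comment> \<open>Shifting \<open>f\<close> by a large real constant \<open>L\<close> makes its sup norm exceed \<open>L\<close> only by \<open>O(1/L)\<close>,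
    while \<open>Re \<mu>\<close> grows by exactly \<open>L\<close>.\<close>
  define L where "L = max B (B\<^sup>2 / e)"
  define h where "h = (\<lambda>t. f t + complex_of_real (L - M))"
  have const: "(\<lambda>_. complex_of_real (L - M)) \<in> X"
    using cc by (simp add: contains_constants_def)
  have "h \<in> X"
    unfolding h_def using closed_linfty_subspace_add[OF X \<open>f \<in> X\<close> const] .
  have "\<mu> h = \<mu> f + \<mu> (\<lambda>_. complex_of_real (L - M))"
    using \<mu> unfolding h_def is_mean_def by (intro in_dual_add[OF _ \<open>f \<in> X\<close> const]) simp
  then have "\<mu> h = \<mu> f + complex_of_real (L - M)"
    by (simp add: mean_const[OF \<mu> cc])
  have "cmod (h t) \<le> sqrt (L\<^sup>2 + B\<^sup>2)" for t
  proof -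
    have "\<bar>Re (f t - M)\<bar> \<le> B" and "\<bar>Im (f t - M)\<bar> \<le> B"
      using B[of t] abs_Re_le_cmod abs_Im_le_cmod order_trans by blast+
    then have "\<bar>Re (h t)\<bar> \<le> L" and "\<bar>Im (h t)\<bar> \<le> B"
      using le[of t] by (auto simp: h_def L_def)
    then show ?thesis
      unfolding cmod_def by (intro real_sqrt_le_mono add_mono; metis abs_ge_zero power2_abs power_mono)
  qed
  then have "e + L \<le> sqrt (L\<^sup>2 + B\<^sup>2)"
    using mean_norm_le[OF X \<mu> \<open>h \<in> X\<close>] complex_Re_le_cmod[of "\<mu> h"] supnorm_least[of h]
      \<open>\<mu> h = \<mu> f + complex_of_real (L - M)\<close>
    by (fastforce simp: e_def)
  have "0 \<le> L"
    using \<open>e > 0\<close> by (simp add: L_def le_max_iff_disj)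
  have "B\<^sup>2 \<le> e * L"
    using \<open>e > 0\<close> pos_divide_le_eq[of e "B\<^sup>2" L] by (simp add: L_def mult.commute)
  have "(e + L)\<^sup>2 \<le> L\<^sup>2 + B\<^sup>2"
    using \<open>e + L \<le> sqrt (L\<^sup>2 + B\<^sup>2)\<close> \<open>0 \<le> L\<close> \<open>e > 0\<close> by (intro sqrt_ge_absD) simp
  also have "\<dots> \<le> L\<^sup>2 + e * L"
    using \<open>B\<^sup>2 \<le> e * L\<close> by simp
  also have "\<dots> < (e + L)\<^sup>2"
    using mult_pos_pos[OF \<open>e > 0\<close> \<open>e > 0\<close>] mult_nonneg_nonneg[OF less_imp_le[OF \<open>e > 0\<close>] \<open>0 \<le> L\<close>]
    by (simp add: power2_eq_square algebra_simps)
  finally show False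
    by simp
qed

lemma ltrans_funpow_apply: "(ltrans s ^^ k) f t = f (((*) s ^^ k) t)"
proof (induction k arbitrary: t)
  case (Suc k)
  have "(ltrans s ^^ Suc k) f t = (ltrans s ^^ k) f (s * t)"
    by (simp add: ltrans_def)
  also have "\<dots> = f (((*) s ^^ Suc k) t)"
    unfolding Suc funpow_Suc_right comp_apply ..
  finally show ?case .
qed simp

lemma left_translation_invariant_funpow:
  "left_translation_invariant X \<Longrightarrow> f \<in> X \<Longrightarrow> (ltrans s ^^ k) f \<in> X"
  by (induction k) (simp_all add: left_translation_invariant_def)

lemma left_invariant_mean_funpow:
  assumes "left_translation_invariant X" and "left_invariant_mean X \<mu>" and "f \<in> X"
  shows "\<mu> ((ltrans s ^^ k) f) = \<mu> f"
  using assms left_translation_invariant_funpow[OF assms(1,3)]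
  by (induction k) (simp_all add: left_invariant_mean_def)

lemma left_invariant_mean_Re_le_0:
  assumes X: "closed_linfty_subspace X" and cc: "contains_constants X"
    and inv: "left_translation_invariant X" and \<mu>: "left_invariant_mean X \<mu>" and "h \<in> X"
    and sums: "\<And>n t. (\<Sum>k<n. Re (h (((*) s ^^ k) t))) \<le> B"
  shows "Re (\<mu> h) \<le> 0"
proof -
  have mean: "is_mean X \<mu>"
    using \<mu> by (simp add: left_invariant_mean_def)
  then have dual: "in_dual X \<mu>"
    by (simp add: is_mean_def)
  have "real n * Re (\<mu> h) \<le> B" for n
  proof -
    define F where "F = (\<lambda>t. \<Sum>k<n. (ltrans s ^^ k) h t)"
    have translates: "(ltrans s ^^ k) h \<in> X" for k
      using left_translation_invariant_funpow[OF inv \<open>h \<in> X\<close>] .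
    have "F \<in> X"
      unfolding F_def by (rule closed_linfty_subspace_sum[OF X translates])
    moreover have "Re (F t) \<le> B" for t
      using sums by (simp add: F_def ltrans_funpow_apply)
    ultimately have "Re (\<mu> F) \<le> B"
      using mean_Re_le[OF X cc mean] by blast
    moreover have "\<mu> F = (\<Sum>k<n. \<mu> ((ltrans s ^^ k) h))"
      unfolding F_def by (rule in_dual_sum[OF X dual translates])
    then have "\<mu> F = of_nat n * \<mu> h"
      by (simp add: left_invariant_mean_funpow[OF inv \<mu> \<open>h \<in> X\<close>])
    ultimately show ?thesis
      by simp
  qed
  then show ?thesis
    by (meson not_le reals_Archimedean3)
qed

section \<open>Orbits of nonexpansive maps\<close>

lemma norm_diff_power2_sub:
  fixes q u v :: "'a::real_inner"
  shows "(norm (q - u))\<^sup>2 - (norm (q - v))\<^sup>2 = (norm u)\<^sup>2 - (norm v)\<^sup>2 - 2 * inner q (u - v)"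
  unfolding power2_norm_eq_inner
  by (simp add: inner_commute algebra_simps)

lemma nonexpansive_telescope:
  fixes F :: "'a::real_inner \<Rightarrow> 'a" and p :: "nat \<Rightarrow> 'a"
  assumes nonexp: "\<And>k. norm (F (p k) - F x) \<le> norm (p k - x)"
    and orbit: "\<And>k. p (Suc k) = F (p k)"
  shows "(\<Sum>k<n. (norm (F x))\<^sup>2 - (norm x)\<^sup>2 - 2 * inner (F (p k)) (F x - x)) \<le> (norm (p 0 - x))\<^sup>2"
proof -
  have "(norm (F x))\<^sup>2 - (norm x)\<^sup>2 - 2 * inner (F (p k)) (F x - x)
      \<le> (norm (p k - x))\<^sup>2 - (norm (p (Suc k) - x))\<^sup>2" for k
  proof -
    have "(norm (F (p k) - F x))\<^sup>2 \<le> (norm (p k - x))\<^sup>2"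
      using nonexp by (simp add: power_mono)
    then show ?thesis
      unfolding orbit using norm_diff_power2_sub[of "F (p k)" "F x" x] by linarith
  qed
  then have "(\<Sum>k<n. (norm (F x))\<^sup>2 - (norm x)\<^sup>2 - 2 * inner (F (p k)) (F x - x))
      \<le> (\<Sum>k<n. (norm (p k - x))\<^sup>2 - (norm (p (Suc k) - x))\<^sup>2)"
    by (rule sum_mono)
  also have "\<dots> = (norm (p 0 - x))\<^sup>2 - (norm (p n - x))\<^sup>2"
    by (rule sum_lessThan_telescope')
  finally show ?thesis
    using zero_le_power2[of "norm (p n - x)"] by linarith
qed

lemma orbit_displacement_sum_le:
  assumes rep: "nonexpansive_representation C T" and "c \<in> C" and "x \<in> C"
    and R: "\<And>t. norm (T t c) \<le> R"
  shows "(\<Sum>k<n. (norm (T s x))\<^sup>2 - (norm x)\<^sup>2 - 2 * inner (T (s * ((*) s ^^ k) t) c) (T s x - x))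
    \<le> (R + norm x)\<^sup>2"
proof -
  define p where "p k = T (((*) s ^^ k) t) c" for k
  have p_C: "p k \<in> C" for k
    using rep \<open>c \<in> C\<close> by (auto simp: p_def nonexpansive_representation_def)
  have T_mult: "T (s * ((*) s ^^ k) t) c = T s (p k)" for k
    using rep \<open>c \<in> C\<close> by (simp add: p_def nonexpansive_representation_def)
  then have "p (Suc k) = T s (p k)" for k
    by (simp add: p_def)
  then have "(\<Sum>k<n. (norm (T s x))\<^sup>2 - (norm x)\<^sup>2 - 2 * inner (T s (p k)) (T s x - x))
      \<le> (norm (p 0 - x))\<^sup>2"
    using nonexpansive_telescope[of "T s" p x n] rep p_C \<open>x \<in> C\<close>
    by (simp add: nonexpansive_representation_def)
  also have "\<dots> \<le> (R + norm x)\<^sup>2"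
    using norm_triangle_ineq4[of "p 0" x] R[of t] by (simp add: p_def power_mono)
  finally show ?thesis
    by (simp add: T_mult)
qed

lemma cinner_T_mu:
  assumes bounded: "bounded (range (\<lambda>s. T s c))" and X: "closed_linfty_subspace X"
    and \<mu>: "is_mean X \<mu>" and orbit_X: "\<And>y. orbit_fun T c y \<in> X"
  shows "cinner (T_mu \<mu> T c) y = \<mu> (orbit_fun T c y)"
proof -
  have dual: "in_dual X \<mu>"
    using \<mu> by (simp add: is_mean_def)
  obtain R where R: "\<And>s. norm (T s c) \<le> R"
    using bounded unfolding bounded_iff by blast
  have "\<exists>!a. \<forall>y. cinner a y = \<mu> (orbit_fun T c y)"
  proof (rule complex_inner_representation)
    show "\<mu> (orbit_fun T c (x + y)) = \<mu> (orbit_fun T c x) + \<mu> (orbit_fun T c y)" for x y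
      using in_dual_add[OF dual orbit_X orbit_X] by (simp add: orbit_fun_def cinner_add_right)
    show "\<mu> (orbit_fun T c (scaleC u x)) = u * \<mu> (orbit_fun T c x)" for u x
      using in_dual_mult[OF dual orbit_X] by (simp add: orbit_fun_def cinner_scaleC_right)
    show "cmod (\<mu> (orbit_fun T c x)) \<le> norm x * R" for x
    proof -
      have "cmod (orbit_fun T c x s) \<le> norm x * R" for s
        using cinner_norm_le[of "T s c" x] R[of s] mult_right_mono[OF R[of s], of "norm x"]
        by (simp add: orbit_fun_def mult.commute)
      then have "supnorm (orbit_fun T c x) \<le> norm x * R"
        by (rule supnorm_least)
      then show ?thesis
        using mean_norm_le[OF X \<mu> orbit_X, of x] by linarith
    qed
  qed
  from theI'[OF this] show ?thesis
    unfolding T_mu_def by blast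
qed

lemma mean_orbit_fun_displacement:
  assumes rep: "nonexpansive_representation C T" and "c \<in> C" and "x \<in> C"
    and bounded: "bounded (range (\<lambda>s. T s c))"
    and X: "closed_linfty_subspace X" and cc: "contains_constants X"
    and inv: "left_translation_invariant X" and \<mu>: "left_invariant_mean X \<mu>"
    and orbit_X: "\<And>y. orbit_fun T c y \<in> X"
  shows "(norm (T s x))\<^sup>2 - (norm x)\<^sup>2 \<le> 2 * Re (\<mu> (orbit_fun T c (T s x - x)))"
proof -
  have dual: "in_dual X \<mu>" and mean: "is_mean X \<mu>"
    using \<mu> by (simp_all add: left_invariant_mean_def is_mean_def)
  obtain R where R: "\<And>t. norm (T t c) \<le> R"
    using bounded unfolding bounded_iff by blast
  define D where "D = (norm (T s x))\<^sup>2 - (norm x)\<^sup>2"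
  define f where "f = orbit_fun T c (T s x - x)"
  define h where "h = (\<lambda>t. complex_of_real D + (- 2) * ltrans s f t)"
  have const: "(\<lambda>_. complex_of_real D) \<in> X"
    using cc by (simp add: contains_constants_def)
  have translate: "ltrans s f \<in> X"
    using inv orbit_X by (simp add: left_translation_invariant_def f_def)
  have "h \<in> X"
    unfolding h_def
    by (intro closed_linfty_subspace_add[OF X const] closed_linfty_subspace_mult[OF X translate])
  have "\<mu> h = \<mu> (\<lambda>_. complex_of_real D) + \<mu> (\<lambda>t. (- 2) * ltrans s f t)"
    unfolding h_def by (rule in_dual_add[OF dual const closed_linfty_subspace_mult[OF X translate]])
  also have "\<dots> = complex_of_real D + (- 2) * \<mu> (ltrans s f)"
    by (simp only: mean_const[OF mean cc] in_dual_mult[OF dual translate])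
  also have "\<mu> (ltrans s f) = \<mu> f"
    using \<mu> orbit_X by (simp add: left_invariant_mean_def f_def)
  finally have "\<mu> h = complex_of_real D - 2 * \<mu> f"
    by simp
  have "Re (h (((*) s ^^ k) t))
      = (norm (T s x))\<^sup>2 - (norm x)\<^sup>2 - 2 * inner (T (s * ((*) s ^^ k) t) c) (T s x - x)" for k t
    by (simp add: h_def D_def ltrans_def f_def orbit_fun_def Re_cinner)
  then have "(\<Sum>k<n. Re (h (((*) s ^^ k) t))) \<le> (R + norm x)\<^sup>2" for n t
    using orbit_displacement_sum_le[OF rep \<open>c \<in> C\<close> \<open>x \<in> C\<close> R] by simp
  then have "Re (\<mu> h) \<le> 0"
    by (rule left_invariant_mean_Re_le_0[OF X cc inv \<mu> \<open>h \<in> X\<close>])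
  then show ?thesis
    using \<open>\<mu> h = complex_of_real D - 2 * \<mu> f\<close> by (simp add: D_def f_def)
qed

theorem lemma4p1:
  fixes C :: "'h::complex_hilbert set"
    and T :: "'s::semigroup_mult \<Rightarrow> 'h \<Rightarrow> 'h"
    and c :: 'h
    and X :: "('s \<Rightarrow> complex) set"
    and \<mu> :: "('s \<Rightarrow> complex) \<Rightarrow> complex"
  assumes "C \<noteq> {}"
    and "nonexpansive_representation C T"
    and "c \<in> C"
    and "bounded (range (\<lambda>s. T s c))"
    and "closed_linfty_subspace X"
    and "contains_constants X"
    and "left_translation_invariant X"
    and "left_invariant_mean X \<mu>"
    and "\<forall>y. orbit_fun T c y \<in> X"
  shows "T_mu \<mu> T c \<in> A_C C T \<and> A_C C T \<noteq> {}"
proof -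
  define a where "a = T_mu \<mu> T c"
  have "is_mean X \<mu>"
    using assms(8) by (simp add: left_invariant_mean_def)
  then have "cinner a y = \<mu> (orbit_fun T c y)" for y
    unfolding a_def using assms(4,5,9) by (intro cinner_T_mu) auto
  then have a: "inner a y = Re (\<mu> (orbit_fun T c y))" for y
    by (simp flip: Re_cinner)
  have "norm (a - T s x) \<le> norm (a - x)" if "x \<in> C" for x s
  proof -
    have "(norm (a - T s x))\<^sup>2 - (norm (a - x))\<^sup>2
        = (norm (T s x))\<^sup>2 - (norm x)\<^sup>2 - 2 * Re (\<mu> (orbit_fun T c (T s x - x)))"
      using norm_diff_power2_sub[of a "T s x" x] by (simp add: a)
    also have "\<dots> \<le> 0"
      using mean_orbit_fun_displacement[OF assms(2,3) that assms(4-8)] assms(9) by simp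
    finally have "(norm (a - T s x))\<^sup>2 \<le> (norm (a - x))\<^sup>2"
      by simp
    then show ?thesis
      by (rule power2_le_imp_le) simp
  qed
  then have "a \<in> A_C C T"
    by (simp add: A_C_def)
  then show ?thesis
    unfolding a_def by blast
qed

end
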